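(* For every $f\in L^{\infty}(\mathbb{R}_+^{\times})$, $\overline{H}_{\infty}(f)=\overline{L}_1(f)$. In particular, the summability methods $(H_\infty,\mathcal{D}(H_\infty))$ and $(L_1,\mathcal{D}(L_1))$ coincide: they have the same domain and assign the same value to each function in it.
   Context: $\mathbb{R}_+^{\times}=[1,\infty)$, $L^{\infty}(\mathbb{R}_+^{\times})$ the real-valued essentially bounded measurable functions on it. Let $(Uf)(x)=\frac1x\int_1^x f(t)\,dt$ and $\overline{H}_k(f)=\limsup_{x\to\infty}(U^kf)(x)$ for $k\ge1$; the sequence $\overline{H}_k(f)$ is nonincreasing in $k$ and bounded below, and $\overline{H}_\infty(f)=\lim_{k\to\infty}\overline{H}_k(f)$. Let $\overline{L}_1(f)=\lim_{\theta\to\infty}\limsup_{x\to\infty}\frac{1}{\log\theta}\int_x^{\theta x}f(t)\frac{dt}{t}$. For a sublinear functional $\overline{F}$ among these, the associated summability method $(F,\mathcal{D}(F))$ has domain $\mathcal{D}(F)=\{f:\overline{F}(f)=-\overline{F}(-f)\}$ and value $F(f)=\overline{F}(f)$ there. *)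

theory Defs
  imports "HOL-Analysis.Analysis"
begin

text \<open>Real-valued essentially bounded measurable functions on [1,\<infinity>).
  Functions are represented as real \<Rightarrow> real; only values on {1..} matter.\<close>
definition Linf :: "(real \<Rightarrow> real) set" where
  "Linf = {f. set_borel_measurable lborel {1..} f \<and>
              (\<exists>C. AE x in lborel. x \<in> {1..} \<longrightarrow> \<bar>f x\<bar> \<le> C)}"

definition U :: "(real \<Rightarrow> real) \<Rightarrow> real \<Rightarrow> real" where
  "U f x = (1 / x) * (LINT t:{1..x}|lborel. f t)"

definition H_upper :: "nat \<Rightarrow> (real \<Rightarrow> real) \<Rightarrow> ereal" where
  "H_upper k f = Limsup at_top (\<lambda>x. ereal ((U ^^ k) f x))"

definition H_inf_upper :: "(real \<Rightarrow> real) \<Rightarrow> ereal" where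
  "H_inf_upper f = lim (\<lambda>k. H_upper (Suc k) f)"

definition L1_upper :: "(real \<Rightarrow> real) \<Rightarrow> ereal" where
  "L1_upper f = Lim at_top (\<lambda>\<theta>. Limsup at_top
       (\<lambda>x. ereal ((1 / ln \<theta>) * (LINT t:{x..\<theta> * x}|lborel. f t / t))))"

definition sdomain :: "((real \<Rightarrow> real) \<Rightarrow> ereal) \<Rightarrow> (real \<Rightarrow> real) set" where
  "sdomain F = {f \<in> Linf. F f = - F (\<lambda>x. - f x)}"

end

theory Submission
  imports Defs
begin

text \<open>Let \<open>A\<^sub>T(g)\<close> be the upper limit as \<open>x \<rightarrow> \<infinity>\<close> of the logarithmic window mean of \<open>g\<close>
  over \<open>[x, e\<^sup>T x]\<close>, i.e. of \<open>(1/T) \<integral> g(t) dt/t\<close> over that interval, so that \<open>L\<^sub>1(g) = lim A\<^sub>T(g)\<close>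
  as \<open>T \<rightarrow> \<infinity>\<close>. Integration by parts, \<open>g = U g + x (U g)'\<close>, gives
  \<open>A\<^sub>T(g) \<le> A\<^sub>T(U g) + 2\<parallel>g\<parallel>/T\<close>, and \<open>A\<^sub>T(U g) \<le> A\<^sub>T(g)\<close> because \<open>U g\<close> is an average of
  dilations of \<open>g\<close>; hence \<open>A\<^sub>T(g) \<le> H\<^sub>k(g) + 2k\<parallel>g\<parallel>/T\<close>. Conversely \<open>U\<^sup>k\<^sup>+\<^sup>1 g\<close> is the
  mean of \<open>g\<close> against the kernel \<open>ln(x/t)\<^sup>k/k!\<close> on \<open>[1, x]\<close>, and consecutive kernel means
  differ by at most \<open>2\<parallel>g\<parallel> e\<^sup>-\<^sup>m m\<^sup>m/m!\<close> with \<open>m = k+1\<close>, which tends to \<open>0\<close>. Thus \<open>U\<^sup>k\<^sup>+\<^sup>1 g\<close>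
  varies slowly on the logarithmic scale, and \<open>H\<^sub>k\<^sub>+\<^sub>1(g) \<le> A\<^sub>T(g) + \<epsilon>\<^sub>k T\<close> with \<open>\<epsilon>\<^sub>k \<rightarrow> 0\<close>.
  Letting \<open>k\<close> and \<open>T\<close> tend to infinity in the two inequalities shows that \<open>lim H\<^sub>k(g)\<close> and
  \<open>lim A\<^sub>T(g)\<close> exist and coincide.\<close>

section \<open>Bounded measurable functions and integrals over intervals\<close>

definition bounded_measurable :: "real \<Rightarrow> (real \<Rightarrow> real) \<Rightarrow> bool" where
  "bounded_measurable C g \<longleftrightarrow> g \<in> borel_measurable borel \<and> (\<forall>t. \<bar>g t\<bar> \<le> C)"

lemma bounded_measurable_measurable [measurable_dest]:
  "bounded_measurable C g \<Longrightarrow> g \<in> borel_measurable borel"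
  by (simp add: bounded_measurable_def)

lemma bounded_measurable_abs_le: "bounded_measurable C g \<Longrightarrow> \<bar>g t\<bar> \<le> C"
  by (simp add: bounded_measurable_def)

lemma bounded_measurable_bound_nonneg: "bounded_measurable C g \<Longrightarrow> 0 \<le> C"
  using bounded_measurable_abs_le[of C g 0] by linarith

lemma bounded_measurable_abs_div_le:
  assumes g: "bounded_measurable C g" and "0 < x" "x \<le> t"
  shows "\<bar>g t / t\<bar> \<le> C / x"
proof -
  have "\<bar>g t\<bar> / t \<le> C / t"
    using bounded_measurable_abs_le[OF g, of t] assms by (simp add: divide_right_mono)
  also have "\<dots> \<le> C / x"
    using bounded_measurable_bound_nonneg[OF g] assms by (simp add: divide_left_mono)
  finally show ?thesis using assms by (simp add: abs_div)
qed

lemma set_integrable_Icc_bounded: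
  fixes f :: "real \<Rightarrow> real"
  assumes [measurable]: "f \<in> borel_measurable borel"
    and "\<And>t. a \<le> t \<Longrightarrow> t \<le> b \<Longrightarrow> \<bar>f t\<bar> \<le> B"
  shows "set_integrable lborel {a..b} f"
  unfolding set_integrable_def
  by (rule integrableI_bounded_set_indicator[where B=B])
     (use assms(2) in \<open>auto simp: emeasure_lborel_Icc_eq\<close>)

lemma set_integral_Icc_mono_bounded:
  fixes f g :: "real \<Rightarrow> real"
  assumes [measurable]: "f \<in> borel_measurable borel" "g \<in> borel_measurable borel"
    and "\<And>t. a \<le> t \<Longrightarrow> t \<le> b \<Longrightarrow> f t \<le> g t"
    and "\<And>t. a \<le> t \<Longrightarrow> t \<le> b \<Longrightarrow> \<bar>f t\<bar> \<le> B"
    and "\<And>t. a \<le> t \<Longrightarrow> t \<le> b \<Longrightarrow> \<bar>g t\<bar> \<le> B"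
  shows "(LINT t:{a..b}|lborel. f t) \<le> (LINT t:{a..b}|lborel. g t)"
  by (rule set_integral_mono)
     (use assms(3) set_integrable_Icc_bounded[OF _ assms(4)] set_integrable_Icc_bounded[OF _ assms(5)]
      in auto)

lemma abs_set_integral_Icc_le_integral:
  fixes f w :: "real \<Rightarrow> real"
  assumes [measurable]: "f \<in> borel_measurable borel" "w \<in> borel_measurable borel"
    and f: "\<And>t. a \<le> t \<Longrightarrow> t \<le> b \<Longrightarrow> \<bar>f t\<bar> \<le> w t"
    and w: "\<And>t. a \<le> t \<Longrightarrow> t \<le> b \<Longrightarrow> \<bar>w t\<bar> \<le> B"
  shows "\<bar>LINT t:{a..b}|lborel. f t\<bar> \<le> (LINT t:{a..b}|lborel. w t)"
proof -
  have fw: "- w t \<le> f t" "f t \<le> w t" "\<bar>f t\<bar> \<le> B" if "a \<le> t" "t \<le> b" for t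
    using f[OF that] w[OF that] by linarith+
  have "(LINT t:{a..b}|lborel. f t) \<le> (LINT t:{a..b}|lborel. w t)"
    by (rule set_integral_Icc_mono_bounded[where B=B]) (use fw w in auto)
  moreover have "(LINT t:{a..b}|lborel. - w t) \<le> (LINT t:{a..b}|lborel. f t)"
    by (rule set_integral_Icc_mono_bounded[where B=B]) (use fw w in auto)
  moreover have "(LINT t:{a..b}|lborel. - w t) = - (LINT t:{a..b}|lborel. w t)"
    by (rule set_integral_uminus) (rule set_integrable_Icc_bounded[where B=B]; use w in auto)
  ultimately show ?thesis by linarith
qed

lemma abs_set_integral_Icc_le:
  fixes f :: "real \<Rightarrow> real"
  assumes [measurable]: "f \<in> borel_measurable borel" and ab: "a \<le> b"
    and f: "\<And>t. a \<le> t \<Longrightarrow> t \<le> b \<Longrightarrow> \<bar>f t\<bar> \<le> B"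
  shows "\<bar>LINT t:{a..b}|lborel. f t\<bar> \<le> B * (b - a)"
proof -
  have "\<bar>LINT t:{a..b}|lborel. f t\<bar> \<le> (LINT t:{a..b}|lborel. B)"
    by (rule abs_set_integral_Icc_le_integral[where B="\<bar>B\<bar>"]) (use f in auto)
  then show ?thesis using ab by (simp add: set_integral_const mult.commute)
qed

lemma set_integral_Icc_split:
  fixes f :: "real \<Rightarrow> real"
  assumes "a \<le> b" "b \<le> c" "set_integrable lborel {a..c} f"
  shows "(LINT t:{a..c}|lborel. f t) = (LINT t:{a..b}|lborel. f t) + (LINT t:{b..c}|lborel. f t)"
proof -
  have "interval_lebesgue_integrable lborel (ereal a) (ereal c) f"
    unfolding interval_lebesgue_integrable_def
    using assms by (auto intro: set_integrable_subset[OF assms(3)])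
  then have "(LBINT t=ereal a..ereal b. f t) + (LBINT t=ereal b..ereal c. f t) = (LBINT t=ereal a..ereal c. f t)"
    by (intro interval_integral_sum) (use assms in \<open>simp add: min_def max_def\<close>)
  then show ?thesis using assms by (simp add: interval_integral_Icc)
qed

lemma set_integral_Icc_FTC:
  fixes f F :: "real \<Rightarrow> real"
  assumes "a \<le> b" "continuous_on {a..b} f"
    and "\<And>x. a \<le> x \<Longrightarrow> x \<le> b \<Longrightarrow> (F has_real_derivative f x) (at x within {a..b})"
  shows "(LINT t:{a..b}|lborel. f t) = F b - F a"
proof -
  have "(LBINT t=ereal a..ereal b. f t) = F b - F a"
    by (rule interval_integral_FTC_finite)
       (use assms in \<open>auto simp: min_def max_def has_real_derivative_iff_has_vector_derivative\<close>)
  then show ?thesis using assms by (simp add: interval_integral_Icc)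
qed

lemma set_integral_Icc_const_div:
  fixes a b c :: real
  assumes "0 < a" "a \<le> b"
  shows "(LINT t:{a..b}|lborel. c / t) = c * (ln b - ln a)"
proof -
  have "(LINT t:{a..b}|lborel. c / t) = c * ln b - c * ln a"
    by (rule set_integral_Icc_FTC)
       (use assms in \<open>auto intro!: derivative_eq_intros continuous_intros simp: field_simps\<close>)
  then show ?thesis by (simp add: right_diff_distrib)
qed

lemma set_integral_Icc_inverse_square:
  fixes a b :: real
  assumes "0 < a" "a \<le> b"
  shows "(LINT t:{a..b}|lborel. 1 / t^2) = 1/a - 1/b"
proof -
  have "(LINT t:{a..b}|lborel. 1 / t^2) = (- 1/b) - (- 1/a)"
    by (rule set_integral_Icc_FTC)
       (use assms in \<open>auto intro!: derivative_eq_intros continuous_intros simp: field_simps power2_eq_square\<close>)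
  then show ?thesis by simp
qed

lemma set_integrable_bounded_mult_continuous:
  fixes g h :: "real \<Rightarrow> real"
  assumes g: "bounded_measurable C g" and [measurable]: "h \<in> borel_measurable borel"
    and "continuous_on {a..b} h"
  shows "set_integrable lborel {a..b} (\<lambda>t. g t * h t)"
proof -
  obtain B where B: "\<And>t. a \<le> t \<Longrightarrow> t \<le> b \<Longrightarrow> \<bar>h t\<bar> \<le> B"
    using continuous_on_compact_bound[OF compact_Icc assms(3)] by (metis atLeastAtMost_iff real_norm_def)
  show ?thesis
    by (rule set_integrable_Icc_bounded[where B="C * B"])
       (use g B bounded_measurable_abs_le[OF g] bounded_measurable_bound_nonneg[OF g]
        in \<open>auto simp: abs_mult intro: mult_mono\<close>)
qed

lemma set_integral_triangle_swap:
  fixes g :: "real \<Rightarrow> real" and h :: "real \<Rightarrow> real \<Rightarrow> real"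
  assumes g: "bounded_measurable C g"
    and [measurable]: "(\<lambda>p. h (snd p) (fst p)) \<in> borel_measurable (lborel \<Otimes>\<^sub>M lborel)"
    and h: "\<And>t u. a \<le> t \<Longrightarrow> t \<le> b \<Longrightarrow> 1 \<le> u \<Longrightarrow> u \<le> t \<Longrightarrow> \<bar>h t u\<bar> \<le> D"
    and "1 \<le> a" "a \<le> b"
  shows "(LINT t:{a..b}|lborel. (LINT u:{1..t}|lborel. g u * h t u))
       = (LINT u:{1..b}|lborel. g u * (LINT t:{max a u..b}|lborel. h t u))"
proof -
  note [measurable] = bounded_measurable_measurable[OF g]
  define \<Phi> where "\<Phi> u t = (if a \<le> t \<and> t \<le> b \<and> 1 \<le> u \<and> u \<le> t then g u * h t u else 0)" for u t
  have "\<bar>h a 1\<bar> \<le> D" by (rule h) (use assms in auto)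
  then have "0 \<le> D" by linarith
  have "(\<lambda>p. \<Phi> (fst p) (snd p)) \<in> borel_measurable (lborel \<Otimes>\<^sub>M lborel)"
    unfolding \<Phi>_def by measurable
  then have "integrable (lborel \<Otimes>\<^sub>M lborel) (case_prod \<Phi>)"
    by (intro integrableI_bounded_set[where A="{1..b} \<times> {a..b}" and B="C * D"])
       (use bounded_measurable_abs_le[OF g] bounded_measurable_bound_nonneg[OF g] h \<open>0 \<le> D\<close>
        in \<open>auto simp: \<Phi>_def abs_mult case_prod_beta' lborel.emeasure_pair_measure_Times
                  ennreal_mult_less_top emeasure_lborel_Icc_eq intro!: mult_mono split: if_splits\<close>)
  then have "(\<integral>t. (\<integral>u. \<Phi> u t \<partial>lborel) \<partial>lborel) = (\<integral>u. (\<integral>t. \<Phi> u t \<partial>lborel) \<partial>lborel)"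
    by (rule lborel_pair.Fubini_integral)
  moreover have "(LINT t:{a..b}|lborel. (LINT u:{1..t}|lborel. g u * h t u))
      = (\<integral>t. (\<integral>u. \<Phi> u t \<partial>lborel) \<partial>lborel)"
    unfolding set_lebesgue_integral_def
    by (rule Bochner_Integration.integral_cong[OF refl])
       (auto simp: \<Phi>_def indicator_def intro!: Bochner_Integration.integral_cong)
  moreover have "indicator {1..b} u *\<^sub>R (g u * (\<integral>t. indicator {max a u..b} t *\<^sub>R h t u \<partial>lborel))
      = (\<integral>t. \<Phi> u t \<partial>lborel)" for u
  proof -
    have "(\<integral>t. \<Phi> u t \<partial>lborel)
        = (\<integral>t. (indicator {1..b} u * g u) * (indicator {max a u..b} t * h t u) \<partial>lborel)"
      by (rule Bochner_Integration.integral_cong) (auto simp: \<Phi>_def indicator_def)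
    then show ?thesis by (simp only: integral_mult_right_zero) simp
  qed
  ultimately show ?thesis unfolding set_lebesgue_integral_def by simp
qed

section \<open>The averaging operator\<close>

definition primitive :: "(real \<Rightarrow> real) \<Rightarrow> real \<Rightarrow> real" where
  "primitive g x = (LINT t:{1..x}|lborel. g t)"

lemma U_eq_primitive: "U g x = primitive g x / x"
  by (simp add: U_def primitive_def)

lemma primitive_eq_0: "x \<le> 1 \<Longrightarrow> primitive g x = 0"
  unfolding primitive_def set_lebesgue_integral_def
  by (rule integral_eq_zero_AE, rule AE_mp[OF AE_lborel_singleton[of 1]]) auto

lemma primitive_add_set_integral:
  assumes g: "bounded_measurable C g" and "1 \<le> x" "x \<le> y"
  shows "primitive g y = primitive g x + (LINT t:{x..y}|lborel. g t)"
  unfolding primitive_def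
  by (rule set_integral_Icc_split)
     (use assms bounded_measurable_abs_le[OF g] in \<open>auto intro!: set_integrable_Icc_bounded[where B=C]\<close>)

lemma abs_primitive_diff_le:
  assumes g: "bounded_measurable C g" and xy: "x \<le> y"
  shows "\<bar>primitive g y - primitive g x\<bar> \<le> C * (y - x)"
proof (cases "y \<le> 1")
  case True
  then show ?thesis using xy bounded_measurable_bound_nonneg[OF g] by (simp add: primitive_eq_0)
next
  case False
  have "\<bar>LINT t:{max 1 x..y}|lborel. g t\<bar> \<le> C * (y - max 1 x)"
    by (rule abs_set_integral_Icc_le) (use False xy g in \<open>auto intro: bounded_measurable_abs_le\<close>)
  moreover have "primitive g y = primitive g (max 1 x) + (LINT t:{max 1 x..y}|lborel. g t)"
    by (rule primitive_add_set_integral[OF g]) (use False xy in auto)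
  moreover have "primitive g (max 1 x) = primitive g x"
    by (cases "x \<le> 1") (auto simp: primitive_eq_0 max_def)
  moreover have "C * (y - max 1 x) \<le> C * (y - x)"
    using bounded_measurable_bound_nonneg[OF g] by (intro mult_left_mono) auto
  ultimately show ?thesis by simp
qed

lemma continuous_primitive:
  assumes "bounded_measurable C g"
  shows "continuous_on UNIV (primitive g)"
proof (rule lipschitz_on_continuous_on[of C])
  show "C-lipschitz_on UNIV (primitive g)"
  proof (rule lipschitz_onI)
    show "dist (primitive g x) (primitive g y) \<le> C * dist x y" for x y
      using abs_primitive_diff_le[OF assms, of x y] abs_primitive_diff_le[OF assms, of y x]
      by (cases "x \<le> y") (auto simp: dist_real_def abs_minus_commute)
  qed (rule bounded_measurable_bound_nonneg[OF assms])
qed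

lemma U_eq_0: "x < 1 \<Longrightarrow> U g x = 0"
  by (simp add: U_eq_primitive primitive_eq_0)

lemma abs_U_le:
  assumes "bounded_measurable C g"
  shows "\<bar>U g x\<bar> \<le> C"
proof (cases "x < 1")
  case True
  then show ?thesis using bounded_measurable_bound_nonneg[OF assms] by (simp add: U_eq_0)
next
  case False
  have "\<bar>primitive g x - primitive g 1\<bar> \<le> C * (x - 1)"
    using abs_primitive_diff_le[OF assms, of 1 x] False by simp
  then have "\<bar>primitive g x\<bar> \<le> C * x"
    using bounded_measurable_bound_nonneg[OF assms] by (simp add: primitive_eq_0 algebra_simps)
  then show ?thesis using False by (simp add: U_eq_primitive abs_div divide_le_eq)
qed

lemma bounded_measurable_U:
  assumes "bounded_measurable C g"
  shows "bounded_measurable C (U g)"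
proof -
  have "U g = (\<lambda>x. primitive g x / x)" by (simp add: fun_eq_iff U_eq_primitive)
  then have "U g \<in> borel_measurable borel"
    using borel_measurable_continuous_onI[OF continuous_primitive[OF assms]] by simp
  then show ?thesis using abs_U_le[OF assms] by (simp add: bounded_measurable_def)
qed

lemma bounded_measurable_U_power: "bounded_measurable C g \<Longrightarrow> bounded_measurable C ((U ^^ k) g)"
  by (induction k) (auto intro: bounded_measurable_U)

lemma set_integral_U_div:
  assumes g: "bounded_measurable C g" and "1 \<le> x" "x \<le> y"
  shows "(LINT t:{x..y}|lborel. U g t / t) = (LINT u:{1..y}|lborel. g u * (1 / max x u - 1 / y))"
proof -
  have "(LINT t:{x..y}|lborel. U g t / t) = (LINT t:{x..y}|lborel. (LINT u:{1..t}|lborel. g u * (1 / t^2)))"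
    by (rule set_lebesgue_integral_cong) (auto simp: U_def power2_eq_square)
  also have "\<dots> = (LINT u:{1..y}|lborel. g u * (LINT t:{max x u..y}|lborel. 1 / t^2))"
    by (rule set_integral_triangle_swap[OF g, where D=1]) (use assms in \<open>auto simp: power_le_one_iff\<close>)
  also have "\<dots> = (LINT u:{1..y}|lborel. g u * (1 / max x u - 1 / y))"
    by (rule set_lebesgue_integral_cong) (use assms in \<open>auto simp: set_integral_Icc_inverse_square\<close>)
  finally show ?thesis .
qed

lemma set_integral_mult_inverse_max:
  assumes g: "bounded_measurable C g" and x: "1 \<le> x" and xy: "x \<le> y"
  shows "(LINT u:{1..y}|lborel. g u * (1 / max x u - 1 / y))
    = primitive g x * (1 / x - 1 / y) + (LINT u:{x..y}|lborel. g u / u) - (LINT u:{x..y}|lborel. g u) / y"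
proof -
  note [measurable] = bounded_measurable_measurable[OF g]
  have g_le: "\<bar>g t\<bar> \<le> C" for t by (rule bounded_measurable_abs_le[OF g])
  have "set_integrable lborel {1..y} (\<lambda>u. g u * (1 / max x u - 1 / y))"
  proof (rule set_integrable_Icc_bounded[where B=C])
    fix t assume "1 \<le> t" "t \<le> y"
    then have "1 / y \<le> 1 / max x t" "1 / max x t \<le> 1" "0 \<le> 1 / y"
      using x xy by (auto intro: divide_left_mono)
    then have "\<bar>1 / max x t - 1 / y\<bar> \<le> 1" by linarith
    then show "\<bar>g t * (1 / max x t - 1 / y)\<bar> \<le> C"
      using g_le[of t] mult_mono[OF g_le[of t]] by (simp add: abs_mult) fastforce
  qed measurable
  then have "(LINT u:{1..y}|lborel. g u * (1 / max x u - 1 / y))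
      = (LINT u:{1..x}|lborel. g u * (1 / max x u - 1 / y))
        + (LINT u:{x..y}|lborel. g u * (1 / max x u - 1 / y))"
    by (rule set_integral_Icc_split[OF x xy])
  also have "(LINT u:{1..x}|lborel. g u * (1 / max x u - 1 / y)) = primitive g x * (1 / x - 1 / y)"
    by (subst set_lebesgue_integral_cong[where g="\<lambda>u. g u * (1 / x - 1 / y)"])
       (auto simp: primitive_def)
  also have "(LINT u:{x..y}|lborel. g u * (1 / max x u - 1 / y))
      = (LINT u:{x..y}|lborel. g u / u - g u / y)"
    by (rule set_lebesgue_integral_cong) (auto simp: max_def field_simps)
  also have "\<dots> = (LINT u:{x..y}|lborel. g u / u) - (LINT u:{x..y}|lborel. g u / y)"
  proof (rule set_integral_diff(2))
    show "set_integrable lborel {x..y} (\<lambda>u. g u / u)"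
      by (rule set_integrable_Icc_bounded[where B=C])
         (use x bounded_measurable_abs_div_le[OF g, of 1] in auto)
    show "set_integrable lborel {x..y} (\<lambda>u. g u / y)"
      by (rule set_integrable_Icc_bounded[where B="C / y"])
         (use x xy g_le in \<open>auto simp: abs_div divide_right_mono\<close>)
  qed
  finally show ?thesis by simp
qed

text \<open>Integration by parts for the Hardy operator: \<open>g = U g + x (U g)'\<close>.\<close>

lemma set_integral_div_eq_U:
  assumes g: "bounded_measurable C g" and x: "1 \<le> x" and xy: "x \<le> y"
  shows "(LINT t:{x..y}|lborel. g t / t) = (LINT t:{x..y}|lborel. U g t / t) + U g y - U g x"
proof -
  have "U g y = primitive g x / y + (LINT u:{x..y}|lborel. g u) / y"
    by (simp add: U_eq_primitive primitive_add_set_integral[OF g x xy] add_divide_distrib)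
  then show ?thesis
    using set_integral_U_div[OF g x xy] set_integral_mult_inverse_max[OF g x xy]
    by (simp add: U_eq_primitive algebra_simps)
qed

section \<open>Iterates of the averaging operator\<close>

definition log_kernel_mean :: "nat \<Rightarrow> (real \<Rightarrow> real) \<Rightarrow> real \<Rightarrow> real" where
  "log_kernel_mean k g x = (1/x) * (LINT t:{1..x}|lborel. g t * (ln (x/t) ^ k / fact k))"

lemma log_kernel_mean_eq_0: "x < 1 \<Longrightarrow> log_kernel_mean k g x = 0"
  by (simp add: log_kernel_mean_def set_lebesgue_integral_def)

lemma log_kernel_mean_0: "log_kernel_mean 0 g = U g"
  by (simp add: fun_eq_iff log_kernel_mean_def U_def)

lemma set_integral_ln_power_div:
  fixes t x :: real
  assumes "0 < t" "t \<le> x"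
  shows "(LINT y:{t..x}|lborel. ln (y/t) ^ k / (fact k * y)) = ln (x/t) ^ Suc k / fact (Suc k)"
proof -
  have "((\<lambda>y. ln (y/t) ^ Suc k / fact (Suc k)) has_real_derivative ln (y/t) ^ k / (fact k * y))
          (at y within {t..x})" if "t \<le> y" for y
  proof -
    have "((\<lambda>y. ln (y/t)) has_real_derivative 1/y) (at y within {t..x})"
      using that assms by (auto intro!: derivative_eq_intros simp: field_simps)
    moreover have "of_nat (Suc k) * (1/y * ln (y/t) ^ (Suc k - Suc 0)) / fact (Suc k)
        = ln (y/t) ^ k / (fact k * y)"
      using that assms by (simp add: fact_Suc field_simps del: of_nat_Suc)
    ultimately show ?thesis by (metis DERIV_cdivide DERIV_power)
  qed
  then have "(LINT y:{t..x}|lborel. ln (y/t) ^ k / (fact k * y))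
      = ln (x/t) ^ Suc k / fact (Suc k) - ln (t/t) ^ Suc k / fact (Suc k)"
    by (intro set_integral_Icc_FTC) (use assms in \<open>auto intro!: continuous_intros\<close>)
  then show ?thesis using assms by simp
qed

lemma U_log_kernel_mean:
  assumes g: "bounded_measurable C g"
  shows "U (log_kernel_mean k g) = log_kernel_mean (Suc k) g"
proof
  fix x :: real
  show "U (log_kernel_mean k g) x = log_kernel_mean (Suc k) g x"
  proof (cases "x < 1")
    case True
    then show ?thesis by (simp add: U_eq_0 log_kernel_mean_eq_0)
  next
    case False
    note [measurable] = bounded_measurable_measurable[OF g]
    have "(LINT y:{1..x}|lborel. log_kernel_mean k g y)
       = (LINT y:{1..x}|lborel. (LINT t:{1..y}|lborel. g t * (ln (y/t) ^ k / (fact k * y))))"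
      by (rule set_lebesgue_integral_cong)
         (auto simp: log_kernel_mean_def set_integral_mult_left[symmetric] intro!: set_lebesgue_integral_cong)
    also have "\<dots> = (LINT t:{1..x}|lborel. g t * (LINT y:{max 1 t..x}|lborel. ln (y/t) ^ k / (fact k * y)))"
    proof (rule set_integral_triangle_swap[OF g, where D="ln x ^ k"])
      fix y t assume yt: "1 \<le> y" "y \<le> x" "1 \<le> t" "t \<le> y"
      have "x * 1 \<le> x * t" using yt by (intro mult_left_mono) auto
      then have "y \<le> x * t" using yt by linarith
      then have "y / t \<le> x" using yt by (simp add: divide_le_eq)
      then have "ln (y/t) ^ k \<le> ln x ^ k" using yt by (intro power_mono) auto
      moreover have "1 * 1 \<le> fact k * y" using yt by (intro mult_mono) (auto simp: fact_ge_1)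
      then have "ln (y/t) ^ k / (fact k * y) \<le> ln (y/t) ^ k / 1"
        using yt by (intro divide_left_mono) auto
      ultimately show "\<bar>ln (y/t) ^ k / (fact k * y)\<bar> \<le> ln x ^ k" using yt by simp
    qed (use False in auto)
    also have "\<dots> = (LINT t:{1..x}|lborel. g t * (ln (x/t) ^ Suc k / fact (Suc k)))"
      by (rule set_lebesgue_integral_cong) (auto simp: set_integral_ln_power_div)
    finally show ?thesis by (simp add: U_def log_kernel_mean_def)
  qed
qed

lemma U_power_Suc_eq_log_kernel_mean:
  "bounded_measurable C g \<Longrightarrow> (U ^^ Suc k) g = log_kernel_mean k g"
  by (induction k) (simp_all add: log_kernel_mean_0 U_log_kernel_mean)

lemma bounded_measurable_log_kernel_mean:
  "bounded_measurable C g \<Longrightarrow> bounded_measurable C (log_kernel_mean k g)"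
  by (metis bounded_measurable_U_power U_power_Suc_eq_log_kernel_mean)

lemma abs_set_integral_mult_deriv_nonneg:
  fixes g d \<phi> :: "real \<Rightarrow> real"
  assumes g: "bounded_measurable C g" and [measurable]: "d \<in> borel_measurable borel"
    and "a \<le> b" and d: "continuous_on {a..b} d"
    and \<phi>: "\<And>t. a \<le> t \<Longrightarrow> t \<le> b \<Longrightarrow> (\<phi> has_real_derivative d t) (at t)"
    and nonneg: "\<And>t. a \<le> t \<Longrightarrow> t \<le> b \<Longrightarrow> 0 \<le> d t"
  shows "\<bar>LINT t:{a..b}|lborel. g t * d t\<bar> \<le> C * (\<phi> b - \<phi> a)"
proof -
  note [measurable] = bounded_measurable_measurable[OF g]
  obtain B where B: "\<And>t. a \<le> t \<Longrightarrow> t \<le> b \<Longrightarrow> \<bar>d t\<bar> \<le> B"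
    using continuous_on_compact_bound[OF compact_Icc d] by (metis atLeastAtMost_iff real_norm_def)
  have C: "0 \<le> C" "\<And>t. \<bar>g t\<bar> \<le> C"
    using bounded_measurable_bound_nonneg[OF g] bounded_measurable_abs_le[OF g] by auto
  have "\<bar>LINT t:{a..b}|lborel. g t * d t\<bar> \<le> (LINT t:{a..b}|lborel. C * d t)"
  proof (rule abs_set_integral_Icc_le_integral[where B="C * B"])
    fix t assume "a \<le> t" "t \<le> b"
    then have "0 \<le> d t" "\<bar>d t\<bar> \<le> B" using nonneg B by auto
    then show "\<bar>g t * d t\<bar> \<le> C * d t" "\<bar>C * d t\<bar> \<le> C * B"
      using C by (simp_all add: abs_mult mult_right_mono mult_left_mono)
  qed measurable
  also have "(LINT t:{a..b}|lborel. d t) = \<phi> b - \<phi> a"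
    by (rule set_integral_Icc_FTC) (use assms in \<open>auto intro: has_field_derivative_at_within\<close>)
  then have "(LINT t:{a..b}|lborel. C * d t) = C * (\<phi> b - \<phi> a)" by simp
  finally show ?thesis .
qed

lemma abs_set_integral_mult_deriv_unimodal:
  fixes g d \<phi> :: "real \<Rightarrow> real"
  assumes g: "bounded_measurable C g" and [measurable]: "d \<in> borel_measurable borel"
    and p: "a \<le> p" "p \<le> b" and d: "continuous_on {a..b} d"
    and \<phi>: "\<And>t. a \<le> t \<Longrightarrow> t \<le> b \<Longrightarrow> (\<phi> has_real_derivative d t) (at t)"
    and up: "\<And>t. a < p \<Longrightarrow> a \<le> t \<Longrightarrow> t \<le> p \<Longrightarrow> 0 \<le> d t"
    and down: "\<And>t. p \<le> t \<Longrightarrow> t \<le> b \<Longrightarrow> d t \<le> 0"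
  shows "\<bar>LINT t:{a..b}|lborel. g t * d t\<bar> \<le> C * ((\<phi> p - \<phi> a) + (\<phi> p - \<phi> b))"
proof -
  note [measurable] = bounded_measurable_measurable[OF g]
  have left: "\<bar>LINT t:{a..p}|lborel. g t * d t\<bar> \<le> C * (\<phi> p - \<phi> a)"
  proof (cases "a = p")
    case True
    then show ?thesis using abs_set_integral_Icc_le[of "\<lambda>t. g t * d t" a a "\<bar>g a * d a\<bar>"] by simp
  next
    case False
    show ?thesis
      by (rule abs_set_integral_mult_deriv_nonneg[OF g])
         (use p False up \<phi> in \<open>auto intro: continuous_on_subset[OF d]\<close>)
  qed
  have "\<bar>LINT t:{p..b}|lborel. g t * - d t\<bar> \<le> C * (- \<phi> b - - \<phi> p)"
  proof (rule abs_set_integral_mult_deriv_nonneg[OF g])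
    show "continuous_on {p..b} (\<lambda>t. - d t)"
      using p by (intro continuous_on_minus continuous_on_subset[OF d]) auto
  qed (use p down \<phi> in \<open>auto intro: DERIV_minus\<close>)
  then have right: "\<bar>LINT t:{p..b}|lborel. g t * d t\<bar> \<le> C * (\<phi> p - \<phi> b)"
    by (simp add: set_lebesgue_integral_def)
  have "(LINT t:{a..b}|lborel. g t * d t) = (LINT t:{a..p}|lborel. g t * d t) + (LINT t:{p..b}|lborel. g t * d t)"
    by (rule set_integral_Icc_split[OF p set_integrable_bounded_mult_continuous[OF g _ d]]) simp
  with left right show ?thesis unfolding distrib_left by linarith
qed

definition poisson_peak :: "nat \<Rightarrow> real" where
  "poisson_peak m = exp (- real m) * real m ^ m / fact m"

lemma poisson_peak_nonneg: "0 \<le> poisson_peak m"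
  by (simp add: poisson_peak_def)

lemma exp_neg_mult_power_le:
  fixes l :: real
  assumes "0 \<le> l" "1 \<le> m"
  shows "exp (- l) * l ^ m \<le> exp (- real m) * real m ^ m"
proof (cases "l = 0")
  case True
  then show ?thesis using assms by (simp add: zero_power)
next
  case False
  then have l: "0 < l" using assms by simp
  have m: "0 < real m" using assms by simp
  have "real m * ln (l / real m) \<le> real m * (l / real m - 1)"
    using l m by (intro mult_left_mono ln_le_minus_one) auto
  then have "- l + real m * ln l \<le> - real m + real m * ln (real m)"
    using l m by (simp add: ln_div right_diff_distrib)
  have "exp (- l) * l ^ m = exp (- l + real m * ln l)"
    by (simp only: exp_add exp_of_nat_mult exp_ln[OF l])
  also have "\<dots> \<le> exp (- real m + real m * ln (real m))"
    using \<open>- l + real m * ln l \<le> - real m + real m * ln (real m)\<close> by simp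
  also have "\<dots> = exp (- real m) * real m ^ m"
    by (simp only: exp_add exp_of_nat_mult exp_ln[OF m])
  finally show ?thesis .
qed

lemma has_real_derivative_mult_ln_power:
  fixes x t :: real
  assumes "0 < x" "0 < t"
  shows "((\<lambda>t. t * ln (x/t) ^ Suc k / fact (Suc k)) has_real_derivative
            ln (x/t) ^ Suc k / fact (Suc k) - ln (x/t) ^ k / fact k) (at t)"
proof -
  have "((\<lambda>t. ln (x/t)) has_real_derivative - 1/t) (at t)"
    using assms by (auto intro!: derivative_eq_intros simp: field_simps power2_eq_square)
  then have "((\<lambda>t. t * ln (x/t) ^ Suc k / fact (Suc k)) has_real_derivative
      (1 * ln (x/t) ^ Suc k + of_nat (Suc k) * (- 1/t * ln (x/t) ^ (Suc k - Suc 0)) * t) / fact (Suc k))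
      (at t)"
    by (intro DERIV_cdivide DERIV_mult DERIV_ident DERIV_power)
  moreover have "(1 * ln (x/t) ^ Suc k + of_nat (Suc k) * (- 1/t * ln (x/t) ^ (Suc k - Suc 0)) * t) / fact (Suc k)
     = ln (x/t) ^ Suc k / fact (Suc k) - ln (x/t) ^ k / fact k"
    using assms by (simp add: fact_Suc field_simps del: of_nat_Suc)
  ultimately show ?thesis by simp
qed

lemma mult_ln_power_le_poisson_peak:
  fixes p x :: real
  assumes "0 < p" "p \<le> x" "1 \<le> m"
  shows "p * ln (x/p) ^ m / fact m \<le> x * poisson_peak m"
proof -
  have "p * ln (x/p) ^ m / fact m = x * (exp (- ln (x/p)) * ln (x/p) ^ m / fact m)"
    using assms by (simp add: exp_minus)
  also have "\<dots> \<le> x * poisson_peak m"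
    unfolding poisson_peak_def using assms
    by (intro mult_left_mono divide_right_mono exp_neg_mult_power_le) auto
  finally show ?thesis .
qed

lemma log_kernel_mean_diff_Suc_eq:
  assumes g: "bounded_measurable C g" and x: "1 \<le> x"
  shows "log_kernel_mean k g x - log_kernel_mean (Suc k) g x
    = - (LINT t:{1..x}|lborel. g t * (ln (x/t) ^ Suc k / fact (Suc k) - ln (x/t) ^ k / fact k)) / x"
proof -
  have "set_integrable lborel {1..x} (\<lambda>t. g t * (ln (x/t) ^ j / fact j))" for j
    by (rule set_integrable_bounded_mult_continuous[OF g]) (use x in \<open>auto intro!: continuous_intros\<close>)
  then have "(LINT t:{1..x}|lborel. g t * (ln (x/t) ^ Suc k / fact (Suc k) - ln (x/t) ^ k / fact k))
      = (LINT t:{1..x}|lborel. g t * (ln (x/t) ^ Suc k / fact (Suc k)))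
        - (LINT t:{1..x}|lborel. g t * (ln (x/t) ^ k / fact k))"
    unfolding right_diff_distrib by (intro set_integral_diff(2))
  moreover have "(1/x) * a - (1/x) * b = - (b - a) / x" for a b :: real
    by (simp add: diff_divide_distrib)
  ultimately show ?thesis by (simp only: log_kernel_mean_def)
qed

text \<open>The difference of consecutive kernels is the derivative of \<open>\<phi> t = t ln (x/t)\<^sup>m / m!\<close>,
  which increases up to \<open>t = x e\<^sup>-\<^sup>m\<close> and decreases afterwards; its maximum \<open>\<phi> (x e\<^sup>-\<^sup>m)\<close>
  is \<open>x\<close> times the Poisson peak.\<close>

lemma abs_log_kernel_mean_diff_Suc_le:
  assumes g: "bounded_measurable C g"
  shows "\<bar>log_kernel_mean k g x - log_kernel_mean (Suc k) g x\<bar> \<le> 2 * C * poisson_peak (Suc k)"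
proof (cases "x < 1")
  case True
  then show ?thesis
    using bounded_measurable_bound_nonneg[OF g] poisson_peak_nonneg by (simp add: log_kernel_mean_eq_0)
next
  case False
  then have x: "1 \<le> x" by simp
  define m where "m = Suc k"
  define \<phi> where "\<phi> t = t * ln (x/t) ^ m / fact m" for t
  define d where "d t = ln (x/t) ^ m / fact m - ln (x/t) ^ k / fact k" for t
  define p where "p = max 1 (x * exp (- real m))"
  have p: "1 \<le> p" "p \<le> x" using x by (auto simp: p_def mult_le_cancel_left1)
  have d_eq: "d t = (ln (x/t) ^ k / fact k) * (ln (x/t) / real m - 1)" for t
    unfolding d_def m_def by (simp add: fact_Suc field_simps del: of_nat_Suc)
  have d_cont: "continuous_on {1..x} d"
    unfolding d_def using x by (intro continuous_intros) auto
  have "\<bar>LINT t:{1..x}|lborel. g t * d t\<bar> \<le> C * ((\<phi> p - \<phi> 1) + (\<phi> p - \<phi> x))"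
  proof (rule abs_set_integral_mult_deriv_unimodal[OF g _ p d_cont])
    show "(\<phi> has_real_derivative d t) (at t)" if "1 \<le> t" for t
      unfolding \<phi>_def d_def m_def using has_real_derivative_mult_ln_power[of x t k] x that by simp
    show "0 \<le> d t" if "1 < p" "1 \<le> t" "t \<le> p" for t
    proof -
      have "t \<le> x * exp (- real m)"
        using that by (auto simp: p_def max_def split: if_splits)
      then have "exp (real m) \<le> x / t"
        using that by (simp add: le_divide_eq exp_minus field_simps)
      then have "ln (exp (real m)) \<le> ln (x / t)" using that x by (subst ln_le_cancel_iff) auto
      then have "real m \<le> ln (x / t)" by simp
      then show ?thesis unfolding d_eq using that by (simp add: m_def le_divide_eq)
    qed
    show "d t \<le> 0" if "p \<le> t" "t \<le> x" for t
    proof -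
      have "x / t \<le> exp (real m)"
        using that p by (simp add: p_def divide_le_eq exp_minus field_simps)
      then have "ln (x / t) \<le> ln (exp (real m))" using that p by (subst ln_le_cancel_iff) auto
      then have "ln (x / t) \<le> real m" by simp
      moreover have "0 \<le> ln (x / t)" using that p by simp
      ultimately show ?thesis
        unfolding d_eq by (intro mult_nonneg_nonpos) (simp_all add: m_def divide_le_eq)
    qed
  qed (unfold d_def[abs_def], measurable)
  also have "\<dots> \<le> 2 * C * \<phi> p"
    using x bounded_measurable_bound_nonneg[OF g] by (simp add: \<phi>_def algebra_simps)
  finally have "\<bar>LINT t:{1..x}|lborel. g t * d t\<bar> / x \<le> 2 * C * (\<phi> p / x)"
    using x by (simp add: divide_right_mono)
  also have "\<dots> \<le> 2 * C * poisson_peak m"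
  proof -
    have "\<phi> p \<le> x * poisson_peak m"
      unfolding \<phi>_def by (rule mult_ln_power_le_poisson_peak) (use p in \<open>auto simp: m_def\<close>)
    then have "\<phi> p / x \<le> poisson_peak m" using x by (simp add: divide_le_eq mult.commute)
    then show ?thesis using bounded_measurable_bound_nonneg[OF g] by (intro mult_left_mono) auto
  qed
  finally have "\<bar>LINT t:{1..x}|lborel. g t * d t\<bar> / x \<le> 2 * C * poisson_peak (Suc k)"
    by (simp add: m_def)
  moreover have "log_kernel_mean k g x - log_kernel_mean (Suc k) g x = - (LINT t:{1..x}|lborel. g t * d t) / x"
    using log_kernel_mean_diff_Suc_eq[OF g x, of k] by (simp only: d_def m_def)
  ultimately show ?thesis using x by (simp add: abs_div)
qed

lemma ln_one_plus_le:
  fixes x :: real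
  assumes x: "0 \<le> x" "x \<le> 1"
  shows "ln (1 + x) \<le> x - x^2/6"
proof -
  define G where "G y = y - y^2/6 - ln (1 + y)" for y :: real
  have "G 0 \<le> G x"
  proof (rule DERIV_nonneg_imp_nondecreasing[OF x(1)])
    fix y assume y: "0 \<le> y" "y \<le> x"
    have "(G has_real_derivative 1 - y/3 - 1/(1+y)) (at y)"
      unfolding G_def using y by (auto intro!: derivative_eq_intros simp: field_simps power2_eq_square)
    moreover have "y * y \<le> y * 2" using y x by (intro mult_left_mono) auto
    then have "0 \<le> 1 - y/3 - 1/(1+y)" using y by (simp add: field_simps)
    ultimately show "\<exists>d. (G has_real_derivative d) (at y) \<and> 0 \<le> d" by blast
  qed
  then show ?thesis by (simp add: G_def)
qed

text \<open>This is \<open>(1 + 1/m)\<^sup>m\<^sup>+\<^sup>1\<^sup>/\<^sup>6 \<le> e\<close>; it makes \<open>m\<^sup>1\<^sup>/\<^sup>6 \<cdot> poisson_peak m\<close> decrease.\<close>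

lemma Suc_div_power_mult_powr_le:
  assumes m: "1 \<le> m"
  shows "((real m + 1) / real m) ^ m * exp (-1) * (real m + 1) powr (1/6) \<le> real m powr (1/6)"
proof -
  have m0: "0 < real m" using m by simp
  define x where "x = 1 / real m"
  have x: "0 < x" "x \<le> 1" "1 + x = (real m + 1) / real m" using m by (auto simp: x_def field_simps)
  have "(real m + 1/6) * ln (1 + x) \<le> (real m + 1/6) * (x - x^2/6)"
    using x by (intro mult_left_mono ln_one_plus_le) auto
  also have "\<dots> = 1 - x^2/36" using m0 by (simp add: x_def field_simps power2_eq_square)
  also have "\<dots> \<le> 1" by simp
  finally have "(real m + 1/6) * ln (1 + x) \<le> 1" .
  with x(3) have key: "real m * ln ((real m + 1) / real m) - 1 + 1/6 * ln (real m + 1) \<le> 1/6 * ln (real m)"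
    using m0 by (simp add: ln_div algebra_simps)
  have e1: "((real m + 1) / real m) ^ m = exp (real m * ln ((real m + 1) / real m))"
    using m0 by (simp add: exp_of_nat_mult)
  have p1: "(real m + 1) powr (1/6) = exp (1/6 * ln (real m + 1))"
    using m0 by (simp add: powr_def)
  have "((real m + 1) / real m) ^ m * exp (-1) * (real m + 1) powr (1/6)
      = exp (real m * ln ((real m + 1) / real m) + (-1) + 1/6 * ln (real m + 1))"
    by (simp only: e1 p1 exp_add)
  also have "\<dots> \<le> exp (1/6 * ln (real m))" using key by simp
  also have "\<dots> = real m powr (1/6)" using m0 by (simp add: powr_def)
  finally show ?thesis .
qed

lemma poisson_peak_Suc_mult_powr_le:
  assumes m: "1 \<le> m"
  shows "poisson_peak (Suc m) * real (Suc m) powr (1/6) \<le> poisson_peak m * real m powr (1/6)"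
proof -
  have m0: "0 < real m" using m by simp
  have "exp (real (Suc m)) = exp 1 * exp (real m)" by (simp add: exp_add[symmetric])
  then have "poisson_peak (Suc m) = poisson_peak m * ((real m + 1) / real m) ^ m * exp (-1)"
    using m0 by (simp add: poisson_peak_def fact_Suc power_divide exp_minus field_simps del: of_nat_Suc)
               (simp add: add.commute)
  moreover have "poisson_peak m * (((real m + 1) / real m) ^ m * exp (-1) * (real m + 1) powr (1/6))
      \<le> poisson_peak m * real m powr (1/6)"
    using Suc_div_power_mult_powr_le[OF m] by (rule mult_left_mono) (simp add: poisson_peak_nonneg)
  ultimately show ?thesis by (simp add: mult.assoc add.commute)
qed

lemma poisson_peak_mult_powr_le: "1 \<le> m \<Longrightarrow> poisson_peak m * real m powr (1/6) \<le> exp (-1)"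
proof (induction m rule: dec_induct)
  case base
  then show ?case by (simp add: poisson_peak_def)
next
  case (step m)
  then show ?case using poisson_peak_Suc_mult_powr_le[of m] by simp
qed

lemma poisson_peak_tendsto_0: "poisson_peak \<longlonglongrightarrow> 0"
proof (rule Lim_null_comparison)
  show "(\<lambda>m. exp (-1) * real m powr (- 1/6)) \<longlonglongrightarrow> 0"
    by (intro tendsto_mult_right_zero tendsto_neg_powr filterlim_real_sequentially) simp
  show "\<forall>\<^sub>F m in sequentially. norm (poisson_peak m) \<le> exp (-1) * real m powr (- 1/6)"
  proof (rule eventually_sequentiallyI[of 1])
    fix m :: nat assume m: "1 \<le> m"
    have "real m powr (1/6) * real m powr (- 1/6) = 1" using m by (simp add: powr_add[symmetric])
    then have "poisson_peak m = (poisson_peak m * real m powr (1/6)) * real m powr (- 1/6)"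
      by (simp add: mult.assoc)
    also have "\<dots> \<le> exp (-1) * real m powr (- 1/6)"
      using poisson_peak_mult_powr_le[OF m] by (intro mult_right_mono) auto
    finally show "norm (poisson_peak m) \<le> exp (-1) * real m powr (- 1/6)"
      using poisson_peak_nonneg[of m] by simp
  qed
qed

section \<open>Upper limits in the extended reals\<close>

lemma ereal_le_if_le_real_above:
  fixes x y :: ereal
  assumes "\<And>a::real. y < ereal a \<Longrightarrow> x \<le> ereal a"
  shows "x \<le> y"
proof (rule dense_ge)
  fix z assume "y < z"
  then show "x \<le> z" using assms by (cases z) auto
qed

lemma Limsup_le_of_le_plus_tendsto_0:
  fixes u :: "'a \<Rightarrow> ereal" and e :: "'a \<Rightarrow> real"
  assumes "\<forall>\<^sub>F x in F. u x \<le> c + ereal (e x)" and "(e \<longlongrightarrow> 0) F"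
  shows "Limsup F u \<le> c"
proof (rule ereal_le_epsilon2)
  fix \<epsilon> :: real assume "0 < \<epsilon>"
  with assms(2) have "\<forall>\<^sub>F x in F. e x < \<epsilon>" by (rule order_tendstoD)
  with assms(1) have "\<forall>\<^sub>F x in F. u x \<le> c + ereal \<epsilon>"
  proof eventually_elim
    case (elim x)
    then show ?case by (meson add_left_mono ereal_less_eq(3) less_imp_le order_trans)
  qed
  then show "Limsup F u \<le> c + ereal \<epsilon>" by (rule Limsup_bounded)
qed

lemma lim_eq_Lim_of_Limsup_le:
  fixes h :: "nat \<Rightarrow> ereal" and A :: "real \<Rightarrow> ereal"
  assumes hA: "\<forall>\<^sub>F \<theta> in at_top. Limsup sequentially h \<le> A \<theta>"
    and Ah: "\<And>k. Limsup at_top A \<le> h k"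
  shows "lim h = Lim at_top A"
proof -
  define L where "L = Limsup sequentially h"
  have "L \<le> Liminf at_top A" unfolding L_def using hA by (rule Liminf_bounded)
  moreover have "Limsup at_top A \<le> Liminf sequentially h" by (rule Liminf_bounded) (simp add: Ah)
  moreover have "Liminf sequentially h \<le> L" "Liminf at_top A \<le> Limsup at_top A"
    unfolding L_def by (simp_all add: Liminf_le_Limsup)
  ultimately have "h \<longlonglongrightarrow> L" "(A \<longlongrightarrow> L) at_top"
    by (auto intro!: Liminf_eq_Limsup simp: L_def)
  then show ?thesis by (simp add: limI tendsto_Lim)
qed

section \<open>Logarithmic window means\<close>

definition log_window_mean :: "real \<Rightarrow> (real \<Rightarrow> real) \<Rightarrow> real \<Rightarrow> real" where
  "log_window_mean T g x = (1/T) * (LINT t:{x..exp T * x}|lborel. g t / t)"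

definition log_window_limsup :: "real \<Rightarrow> (real \<Rightarrow> real) \<Rightarrow> ereal" where
  "log_window_limsup T g = Limsup at_top (\<lambda>x. ereal (log_window_mean T g x))"

lemma set_integral_log_window_const_div:
  fixes x T c :: real
  assumes "0 < x" "0 \<le> T"
  shows "(LINT t:{x..exp T * x}|lborel. c / t) = c * T"
proof -
  have "x \<le> exp T * x" using assms mult_right_mono[of 1 "exp T" x] by simp
  then show ?thesis using assms by (simp add: set_integral_Icc_const_div ln_mult)
qed

lemma abs_log_window_mean_le:
  assumes h: "bounded_measurable C h" and "0 < T" "0 < x"
  shows "\<bar>log_window_mean T h x\<bar> \<le> C"
proof -
  note [measurable] = bounded_measurable_measurable[OF h]
  have "\<bar>LINT t:{x..exp T * x}|lborel. h t / t\<bar> \<le> (LINT t:{x..exp T * x}|lborel. C / t)"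
  proof (rule abs_set_integral_Icc_le_integral[where B="C / x"])
    fix t assume t: "x \<le> t" "t \<le> exp T * x"
    show "\<bar>h t / t\<bar> \<le> C / t"
      using bounded_measurable_abs_le[OF h, of t] assms t by (simp add: abs_div divide_right_mono)
    show "\<bar>C / t\<bar> \<le> C / x"
      using bounded_measurable_bound_nonneg[OF h] assms t by (simp add: divide_left_mono)
  qed measurable
  also have "\<dots> = C * T" using assms by (simp add: set_integral_log_window_const_div)
  finally show ?thesis using assms by (simp add: log_window_mean_def abs_mult divide_le_eq mult.commute)
qed

lemma log_window_mean_eq_U:
  assumes h: "bounded_measurable C h" and T: "0 < T" and x: "1 \<le> x"
  shows "log_window_mean T h x = log_window_mean T (U h) x + (U h (exp T * x) - U h x) / T"
proof -
  have "x \<le> exp T * x" using T x by simp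
  from set_integral_div_eq_U[OF h x this] show ?thesis
    unfolding log_window_mean_def using T by (simp add: field_simps) (metis distrib_left)
qed

lemma log_window_limsup_le_U:
  assumes h: "bounded_measurable C h" and T: "0 < T"
  shows "log_window_limsup T h \<le> log_window_limsup T (U h) + ereal (2 * C / T)"
proof -
  have "\<forall>\<^sub>F x in at_top. ereal (log_window_mean T h x) \<le> ereal (log_window_mean T (U h) x) + ereal (2 * C / T)"
  proof (rule eventually_mono[OF eventually_ge_at_top[of 1]])
    fix x :: real assume x: "1 \<le> x"
    have "\<bar>U h (exp T * x) - U h x\<bar> \<le> 2 * C"
      using abs_U_le[OF h, of "exp T * x"] abs_U_le[OF h, of x] by linarith
    then have "(U h (exp T * x) - U h x) / T \<le> 2 * C / T" using T by (simp add: divide_right_mono)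
    then show "ereal (log_window_mean T h x) \<le> ereal (log_window_mean T (U h) x) + ereal (2 * C / T)"
      using log_window_mean_eq_U[OF h T x] by simp
  qed
  then have "log_window_limsup T h \<le> Limsup at_top (\<lambda>x. ereal (log_window_mean T (U h) x) + ereal (2 * C / T))"
    unfolding log_window_limsup_def by (rule Limsup_mono)
  also have "\<dots> = log_window_limsup T (U h) + ereal (2 * C / T)"
    unfolding log_window_limsup_def by (rule Limsup_add_ereal_right) auto
  finally show ?thesis .
qed

lemma log_window_limsup_le_Limsup:
  assumes V: "bounded_measurable C V" and T: "0 < T"
  shows "log_window_limsup T V \<le> Limsup at_top (\<lambda>x. ereal (V x))"
proof (rule ereal_le_if_le_real_above)
  note [measurable] = bounded_measurable_measurable[OF V]
  fix a :: real assume "Limsup at_top (\<lambda>x. ereal (V x)) < ereal a"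
  then have "\<forall>\<^sub>F x in at_top. ereal (V x) < ereal a" by (rule Limsup_lessD)
  then obtain Z where Z: "\<And>x. Z \<le> x \<Longrightarrow> V x < a" by (auto simp: eventually_at_top_linorder)
  have "\<forall>\<^sub>F x in at_top. ereal (log_window_mean T V x) \<le> ereal a"
  proof (rule eventually_mono[OF eventually_ge_at_top[of "max Z 1"]])
    fix x :: real assume x: "max Z 1 \<le> x"
    have "(LINT t:{x..exp T * x}|lborel. V t / t) \<le> (LINT t:{x..exp T * x}|lborel. a / t)"
    proof (rule set_integral_Icc_mono_bounded[where B="C + \<bar>a\<bar>"])
      fix t assume t: "x \<le> t" "t \<le> exp T * x"
      then have "1 \<le> t" "Z \<le> t" using x by auto
      then have "V t < a" "\<bar>V t / t\<bar> \<le> C" "\<bar>a / t\<bar> \<le> \<bar>a\<bar>" "0 \<le> C"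
        using Z[of t] bounded_measurable_abs_div_le[OF V, of 1 t] bounded_measurable_bound_nonneg[OF V]
        by (auto simp: abs_div divide_le_eq mult_le_cancel_left1)
      then show "V t / t \<le> a / t" "\<bar>V t / t\<bar> \<le> C + \<bar>a\<bar>" "\<bar>a / t\<bar> \<le> C + \<bar>a\<bar>"
        using \<open>1 \<le> t\<close> by (auto simp: divide_right_mono)
    qed auto
    also have "\<dots> = a * T" using x T by (simp add: set_integral_log_window_const_div)
    finally show "ereal (log_window_mean T V x) \<le> ereal a"
      using T by (simp add: log_window_mean_def divide_le_eq mult.commute)
  qed
  then show "log_window_limsup T V \<le> ereal a" unfolding log_window_limsup_def by (rule Limsup_bounded)
qed

lemma U_lower_bound_of_close_to_U:
  assumes W: "bounded_measurable C W" and close: "\<And>t. \<bar>W t - U W t\<bar> \<le> \<delta>"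
    and x: "1 \<le> x" and t: "x \<le> t"
  shows "U W x - \<delta> * (ln t - ln x) \<le> U W t"
proof -
  note [measurable] = bounded_measurable_measurable[OF W]
    bounded_measurable_measurable[OF bounded_measurable_U[OF W]]
  have int: "set_integrable lborel {x..t} (\<lambda>s. V s / s)" if V: "bounded_measurable C V" for V
  proof -
    note [measurable] = bounded_measurable_measurable[OF V]
    show ?thesis
      by (rule set_integrable_Icc_bounded[where B=C])
         (use x bounded_measurable_abs_div_le[OF V, of 1] in auto)
  qed
  have "U W t - U W x = (LINT s:{x..t}|lborel. W s / s - U W s / s)"
    using set_integral_div_eq_U[OF W x t]
      set_integral_diff(2)[OF int[OF W] int[OF bounded_measurable_U[OF W]]] by simp
  moreover have "\<bar>LINT s:{x..t}|lborel. W s / s - U W s / s\<bar> \<le> (LINT s:{x..t}|lborel. \<delta> / s)"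
  proof (rule abs_set_integral_Icc_le_integral[where B=\<delta>])
    fix s assume s: "x \<le> s" "s \<le> t"
    then have "1 \<le> s" using x by simp
    have "0 \<le> \<delta>" using close[of s] by linarith
    have "\<bar>W s / s - U W s / s\<bar> = \<bar>W s - U W s\<bar> / s"
      using \<open>1 \<le> s\<close> by (simp add: diff_divide_distrib[symmetric] abs_div)
    also have "\<dots> \<le> \<delta> / s" using close[of s] \<open>1 \<le> s\<close> by (simp add: divide_right_mono)
    finally show "\<bar>W s / s - U W s / s\<bar> \<le> \<delta> / s" .
    show "\<bar>\<delta> / s\<bar> \<le> \<delta>"
      using \<open>1 \<le> s\<close> \<open>0 \<le> \<delta>\<close> by (simp add: divide_le_eq) (metis mult_left_mono mult.right_neutral)
  qed measurable
  moreover have "(LINT s:{x..t}|lborel. \<delta> / s) = \<delta> * (ln t - ln x)"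
    using x t by (simp add: set_integral_Icc_const_div)
  ultimately show ?thesis by linarith
qed

lemma le_log_window_mean_of_close_to_U:
  assumes W: "bounded_measurable C W" and close: "\<And>t. \<bar>W t - U W t\<bar> \<le> \<delta>"
    and T: "0 < T" and x: "1 \<le> x"
  shows "U W x \<le> log_window_mean T (U W) x + \<delta> * T"
proof -
  have V: "bounded_measurable C (U W)" by (rule bounded_measurable_U[OF W])
  note [measurable] = bounded_measurable_measurable[OF V]
  have "0 \<le> \<delta>" using close[of 0] by linarith
  have "(LINT t:{x..exp T * x}|lborel. (U W x - \<delta> * T) / t) \<le> (LINT t:{x..exp T * x}|lborel. U W t / t)"
  proof (rule set_integral_Icc_mono_bounded[where B="C + \<bar>U W x - \<delta> * T\<bar>"])
    fix t assume t: "x \<le> t" "t \<le> exp T * x"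
    then have "1 \<le> t" using x by simp
    have "ln t \<le> ln (exp T * x)" by (rule ln_mono) (use t x in auto)
    then have "ln t - ln x \<le> T" using x by (simp add: ln_mult)
    then have "\<delta> * (ln t - ln x) \<le> \<delta> * T" using \<open>0 \<le> \<delta>\<close> by (rule mult_left_mono)
    then have "U W x - \<delta> * T \<le> U W t"
      using U_lower_bound_of_close_to_U[OF W close x t(1)] by linarith
    then show "(U W x - \<delta> * T) / t \<le> U W t / t" using \<open>1 \<le> t\<close> by (simp add: divide_right_mono)
    show "\<bar>U W t / t\<bar> \<le> C + \<bar>U W x - \<delta> * T\<bar>"
      using bounded_measurable_abs_div_le[OF V, of 1 t] \<open>1 \<le> t\<close> by simp
    show "\<bar>(U W x - \<delta> * T) / t\<bar> \<le> C + \<bar>U W x - \<delta> * T\<bar>"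
    proof -
      have "\<bar>U W x - \<delta> * T\<bar> / t \<le> \<bar>U W x - \<delta> * T\<bar> / 1"
        using \<open>1 \<le> t\<close> by (intro divide_left_mono) auto
      then show ?thesis using \<open>1 \<le> t\<close> bounded_measurable_bound_nonneg[OF V] by (simp add: abs_div)
    qed
  qed measurable
  then have "(U W x - \<delta> * T) * T \<le> (LINT t:{x..exp T * x}|lborel. U W t / t)"
    using x T by (simp add: set_integral_log_window_const_div)
  then show ?thesis using T by (simp add: log_window_mean_def field_simps)
qed

definition cut_below_1 :: "(real \<Rightarrow> real) \<Rightarrow> real \<Rightarrow> real" where
  "cut_below_1 h t = (if 1 \<le> t then h t else 0)"

lemma bounded_measurable_cut_below_1:
  assumes "bounded_measurable C h"
  shows "bounded_measurable C (cut_below_1 h)"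
proof -
  note [measurable] = bounded_measurable_measurable[OF assms]
  have "cut_below_1 h \<in> borel_measurable borel" unfolding cut_below_1_def by measurable
  then show ?thesis
    using bounded_measurable_abs_le[OF assms] bounded_measurable_bound_nonneg[OF assms]
    by (auto simp: bounded_measurable_def cut_below_1_def)
qed

lemma log_window_mean_cut_below_1: "1 \<le> x \<Longrightarrow> log_window_mean T (cut_below_1 h) x = log_window_mean T h x"
  unfolding log_window_mean_def
  by (subst set_lebesgue_integral_cong[where g="\<lambda>t. h t / t"]) (auto simp: cut_below_1_def)

lemma U_eq_dilation_integral:
  assumes "0 < y"
  shows "U h y = (\<integral>v. indicator {0..1} v * cut_below_1 h (v * y) \<partial>lborel)"
proof -
  have "(LINT t:{1..y}|lborel. h t) = (\<integral>t. indicator {0..y} t * cut_below_1 h t \<partial>lborel)"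
    unfolding set_lebesgue_integral_def
    by (rule Bochner_Integration.integral_cong) (auto simp: cut_below_1_def indicator_def)
  also have "\<dots> = \<bar>y\<bar> *\<^sub>R (\<integral>v. indicator {0..y} (0 + y * v) * cut_below_1 h (0 + y * v) \<partial>lborel)"
    by (rule lborel_integral_real_affine) (use assms in simp)
  also have "(\<lambda>v. indicator {0..y} (0 + y * v) * cut_below_1 h (0 + y * v))
      = (\<lambda>v. indicator {0..1} v * cut_below_1 h (v * y))"
    using assms by (auto simp: fun_eq_iff indicator_def mult.commute zero_le_mult_iff mult_le_cancel_left1)
  finally show ?thesis using assms by (simp add: U_def)
qed

lemma log_window_mean_dilate:
  fixes f :: "real \<Rightarrow> real"
  assumes "0 < v" "T \<noteq> 0"
  shows "(\<integral>y. indicator {x..exp T * x} y * (f (v * y) / y) \<partial>lborel) = T * log_window_mean T f (v * x)"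
proof -
  have "(\<lambda>y. indicator {v * x..exp T * (v * x)} (0 + v * y) * (f (0 + v * y) / (0 + v * y)))
      = (\<lambda>y. (1 / v) * (indicator {x..exp T * x} y * (f (v * y) / y)))"
  proof
    fix y
    have "(v * y \<in> {v * x..exp T * (v * x)}) = (y \<in> {x..exp T * x})"
      using assms by (simp add: mult.left_commute[of "exp T"] mult_le_cancel_left_pos)
    then show "indicator {v * x..exp T * (v * x)} (0 + v * y) * (f (0 + v * y) / (0 + v * y))
        = (1 / v) * (indicator {x..exp T * x} y * (f (v * y) / y))"
      using assms by (simp add: indicator_def)
  qed
  then have "(\<integral>s. indicator {v * x..exp T * (v * x)} s * (f s / s) \<partial>lborel)
      = (\<integral>y. indicator {x..exp T * x} y * (f (v * y) / y) \<partial>lborel)"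
    using lborel_integral_real_affine[of v "\<lambda>s. indicator {v * x..exp T * (v * x)} s * (f s / s)" 0] assms
    by (simp only: integral_mult_right_zero) simp
  then show ?thesis using assms by (simp add: log_window_mean_def set_lebesgue_integral_def)
qed

lemma log_window_mean_U_eq_dilation_integral:
  assumes h: "bounded_measurable C h" and T: "0 < T" and x: "0 < x"
  shows "T * log_window_mean T (U h) x
    = (LINT v:{0..1}|lborel. (\<integral>y. indicator {x..exp T * x} y * (cut_below_1 h (v * y) / y) \<partial>lborel))"
proof -
  have hh: "bounded_measurable C (cut_below_1 h)" by (rule bounded_measurable_cut_below_1[OF h])
  note [measurable] = bounded_measurable_measurable[OF hh]
  define \<Phi> where "\<Phi> v y = indicator {0..1} v * indicator {x..exp T * x} y * (cut_below_1 h (v * y) / y)"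
    for v y :: real
  have "(\<lambda>p. \<Phi> (fst p) (snd p)) \<in> borel_measurable (lborel \<Otimes>\<^sub>M lborel)"
    unfolding \<Phi>_def by measurable
  moreover have "norm (\<Phi> v y) \<le> C / x" for v y
  proof -
    have "\<bar>cut_below_1 h (v * y)\<bar> / y \<le> C / y" if "x \<le> y"
      using bounded_measurable_abs_le[OF hh] x that by (intro divide_right_mono) auto
    moreover have "C / y \<le> C / x" if "x \<le> y"
      using bounded_measurable_bound_nonneg[OF h] x that by (intro divide_left_mono) auto
    ultimately show ?thesis
      using bounded_measurable_bound_nonneg[OF h] x by (auto simp: \<Phi>_def indicator_def abs_div)
  qed
  ultimately have "integrable (lborel \<Otimes>\<^sub>M lborel) (case_prod \<Phi>)"
    by (intro integrableI_bounded_set[where A="{0..1} \<times> {x..exp T * x}" and B="C / x"])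
       (auto simp: case_prod_beta' lborel.emeasure_pair_measure_Times ennreal_mult_less_top
          emeasure_lborel_Icc_eq \<Phi>_def indicator_def intro!: AE_I2)
  then have "(\<integral>y. (\<integral>v. \<Phi> v y \<partial>lborel) \<partial>lborel) = (\<integral>v. (\<integral>y. \<Phi> v y \<partial>lborel) \<partial>lborel)"
    by (rule lborel_pair.Fubini_integral)
  moreover have "indicator {x..exp T * x} y * (U h y / y) = (\<integral>v. \<Phi> v y \<partial>lborel)" for y
  proof (cases "y \<in> {x..exp T * x}")
    case True
    then have "0 < y" using x by auto
    have "(\<integral>v. \<Phi> v y \<partial>lborel)
        = (\<integral>v. indicator {0..1} v * cut_below_1 h (v * y) * (indicator {x..exp T * x} y / y) \<partial>lborel)"
      by (rule Bochner_Integration.integral_cong) (auto simp: \<Phi>_def)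
    also have "\<dots> = U h y * (indicator {x..exp T * x} y / y)"
      by (simp only: integral_mult_left_zero U_eq_dilation_integral[OF \<open>0 < y\<close>])
    finally show ?thesis by simp
  qed (simp add: \<Phi>_def)
  moreover have "indicator {0..1} v *\<^sub>R (\<integral>y. indicator {x..exp T * x} y * (cut_below_1 h (v * y) / y) \<partial>lborel)
      = (\<integral>y. \<Phi> v y \<partial>lborel)" for v
    unfolding \<Phi>_def mult.assoc by (simp only: integral_mult_right_zero) simp
  ultimately show ?thesis
    using T by (simp add: log_window_mean_def set_lebesgue_integral_def)
qed

text \<open>\<open>U h\<close> averages the dilations \<open>v \<mapsto> h (v x)\<close>, \<open>0 \<le> v \<le> 1\<close>, and the logarithmic window
  mean commutes with dilations; only the dilations with \<open>v x < Z\<close> can exceed \<open>a\<close>.\<close>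

lemma log_window_mean_U_le:
  assumes h: "bounded_measurable C h" and T: "0 < T" and Z: "1 \<le> Z"
    and a: "\<And>z. Z \<le> z \<Longrightarrow> log_window_mean T h z \<le> a" and x: "Z \<le> x"
  shows "log_window_mean T (U h) x \<le> a + (C - a) * (Z / x)"
proof -
  have hh: "bounded_measurable C (cut_below_1 h)" by (rule bounded_measurable_cut_below_1[OF h])
  note [measurable] = bounded_measurable_measurable[OF hh]
  have C: "0 \<le> C" by (rule bounded_measurable_bound_nonneg[OF h])
  have x0: "0 < x" using x Z by simp
  define G where "G v = (\<integral>y. indicator {x..exp T * x} y * (cut_below_1 h (v * y) / y) \<partial>lborel)" for v
  define r where "r = Z / x"
  have r: "0 < r" "r \<le> 1" using x Z x0 by (auto simp: r_def)
  have G_dilate: "G v = T * log_window_mean T (cut_below_1 h) (v * x)" if "0 < v" for v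
    unfolding G_def by (rule log_window_mean_dilate) (use that T in auto)
  have G_le: "\<bar>G v\<bar> \<le> C * T" if "0 \<le> v" for v
  proof (cases "v = 0")
    case True
    then show ?thesis using C T by (simp add: G_def cut_below_1_def)
  next
    case False
    then show ?thesis
      using G_dilate[of v] abs_log_window_mean_le[OF hh T, of "v * x"] that x0 T
      by (simp add: abs_mult mult.commute)
  qed
  have [measurable]: "G \<in> borel_measurable borel" unfolding G_def by measurable
  have "T * log_window_mean T (U h) x = (LINT v:{0..1}|lborel. G v)"
    unfolding G_def by (rule log_window_mean_U_eq_dilation_integral[OF h T x0])
  also have "\<dots> = (LINT v:{0..r}|lborel. G v) + (LINT v:{r..1}|lborel. G v)"
    using r by (intro set_integral_Icc_split set_integrable_Icc_bounded[where B="C * T"] G_le) auto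
  also have "(LINT v:{0..r}|lborel. G v) \<le> C * T * r"
    using abs_set_integral_Icc_le[of G 0 r "C * T"] G_le r by simp
  also have "(LINT v:{r..1}|lborel. G v) \<le> (LINT v:{r..1}|lborel. a * T)"
  proof (rule set_integral_Icc_mono_bounded[where B="C * T + \<bar>a\<bar> * T"])
    fix v assume v: "r \<le> v" "v \<le> 1"
    then have "Z \<le> v * x" using x0 by (simp add: r_def divide_le_eq)
    then have "G v = T * log_window_mean T h (v * x)"
      using G_dilate[of v] r v Z by (simp add: log_window_mean_cut_below_1)
    then show "G v \<le> a * T" using a[OF \<open>Z \<le> v * x\<close>] T by simp
    show "\<bar>G v\<bar> \<le> C * T + \<bar>a\<bar> * T" "\<bar>a * T\<bar> \<le> C * T + \<bar>a\<bar> * T"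
      using G_le[of v] v r T C by (auto simp: abs_mult add_increasing2)
  qed auto
  also have "(LINT v:{r..1}|lborel. a * T) = a * T * (1 - r)"
    using r by (simp add: set_integral_const)
  finally have "T * log_window_mean T (U h) x \<le> T * (a + (C - a) * r)"
    by (simp add: algebra_simps)
  then show ?thesis using T by (simp add: r_def)
qed

lemma log_window_limsup_U_le:
  assumes h: "bounded_measurable C h" and T: "0 < T"
  shows "log_window_limsup T (U h) \<le> log_window_limsup T h"
proof (rule ereal_le_if_le_real_above)
  fix a :: real assume "log_window_limsup T h < ereal a"
  then have "\<forall>\<^sub>F z in at_top. ereal (log_window_mean T h z) < ereal a"
    unfolding log_window_limsup_def by (rule Limsup_lessD)
  then obtain Z0 where Z0: "\<And>z. Z0 \<le> z \<Longrightarrow> log_window_mean T h z < a"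
    by (auto simp: eventually_at_top_linorder)
  define Z where "Z = max Z0 1"
  have Z: "1 \<le> Z" "\<And>z. Z \<le> z \<Longrightarrow> log_window_mean T h z \<le> a"
    using Z0 by (auto simp: Z_def less_imp_le)
  have "\<forall>\<^sub>F x in at_top. ereal (log_window_mean T (U h) x) \<le> ereal a + ereal ((C - a) * (Z / x))"
    using eventually_ge_at_top[of Z]
    by eventually_elim (use log_window_mean_U_le[OF h T Z] in simp)
  moreover have "((\<lambda>x. (C - a) * (Z / x)) \<longlongrightarrow> 0) at_top"
    by (intro tendsto_mult_right_zero tendsto_divide_0[OF tendsto_const]
        filterlim_at_top_imp_at_infinity filterlim_ident)
  ultimately show "log_window_limsup T (U h) \<le> ereal a"
    unfolding log_window_limsup_def by (rule Limsup_le_of_le_plus_tendsto_0)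
qed

lemma log_window_limsup_le_U_power:
  assumes g: "bounded_measurable C g" and T: "0 < T"
  shows "log_window_limsup T g \<le> log_window_limsup T ((U ^^ n) g) + ereal (2 * real n * C / T)"
proof (induction n)
  case 0
  then show ?case by simp
next
  case (Suc n)
  have "log_window_limsup T ((U ^^ n) g) \<le> log_window_limsup T ((U ^^ Suc n) g) + ereal (2 * C / T)"
    using log_window_limsup_le_U[OF bounded_measurable_U_power[OF g] T] by simp
  with Suc.IH have "log_window_limsup T g
      \<le> log_window_limsup T ((U ^^ Suc n) g) + ereal (2 * C / T) + ereal (2 * real n * C / T)"
    by (metis add_right_mono order_trans)
  also have "\<dots> = log_window_limsup T ((U ^^ Suc n) g) + ereal (2 * real (Suc n) * C / T)"
    by (simp add: add.assoc add_divide_distrib[symmetric] algebra_simps)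
  finally show ?case .
qed

lemma log_window_limsup_U_power_le:
  assumes g: "bounded_measurable C g" and T: "0 < T"
  shows "log_window_limsup T ((U ^^ n) g) \<le> log_window_limsup T g"
proof (induction n)
  case (Suc n)
  then show ?case
    using log_window_limsup_U_le[OF bounded_measurable_U_power[OF g] T, of n] by simp
qed simp

lemma log_window_limsup_le_H_upper:
  assumes g: "bounded_measurable C g" and T: "0 < T"
  shows "log_window_limsup T g \<le> H_upper n g + ereal (2 * real n * C / T)"
proof -
  have "log_window_limsup T g \<le> log_window_limsup T ((U ^^ n) g) + ereal (2 * real n * C / T)"
    by (rule log_window_limsup_le_U_power[OF g T])
  also have "\<dots> \<le> H_upper n g + ereal (2 * real n * C / T)"
    unfolding H_upper_def
    by (intro add_right_mono log_window_limsup_le_Limsup[OF bounded_measurable_U_power[OF g] T])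
  finally show ?thesis .
qed

lemma H_upper_le_log_window_limsup:
  assumes g: "bounded_measurable C g" and T: "0 < T"
  shows "H_upper (Suc (Suc k)) g \<le> log_window_limsup T g + ereal (2 * C * poisson_peak (Suc k) * T)"
proof -
  define W where "W = log_kernel_mean k g"
  define \<delta> where "\<delta> = 2 * C * poisson_peak (Suc k)"
  have W: "bounded_measurable C W" unfolding W_def by (rule bounded_measurable_log_kernel_mean[OF g])
  have UW: "U W = (U ^^ Suc (Suc k)) g"
    unfolding W_def U_log_kernel_mean[OF g] by (rule U_power_Suc_eq_log_kernel_mean[OF g, symmetric])
  have close: "\<bar>W t - U W t\<bar> \<le> \<delta>" for t
    using abs_log_kernel_mean_diff_Suc_le[OF g, of k t] by (simp add: W_def \<delta>_def U_log_kernel_mean[OF g])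
  have "\<forall>\<^sub>F x in at_top. ereal (U W x) \<le> ereal (log_window_mean T (U W) x) + ereal (\<delta> * T)"
    using eventually_ge_at_top[of 1]
    by eventually_elim (use le_log_window_mean_of_close_to_U[OF W close T] in simp)
  then have "Limsup at_top (\<lambda>x. ereal (U W x))
      \<le> Limsup at_top (\<lambda>x. ereal (log_window_mean T (U W) x) + ereal (\<delta> * T))"
    by (rule Limsup_mono)
  also have "\<dots> = log_window_limsup T (U W) + ereal (\<delta> * T)"
    unfolding log_window_limsup_def by (rule Limsup_add_ereal_right) auto
  also have "\<dots> \<le> log_window_limsup T g + ereal (\<delta> * T)"
    unfolding UW by (intro add_right_mono log_window_limsup_U_power_le[OF g T])
  finally show ?thesis by (simp add: H_upper_def UW \<delta>_def)
qed

lemma Limsup_H_upper_le_log_window_limsup: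
  assumes g: "bounded_measurable C g" and T: "0 < T"
  shows "Limsup sequentially (\<lambda>k. H_upper (Suc k) g) \<le> log_window_limsup T g"
proof (rule Limsup_le_of_le_plus_tendsto_0)
  show "\<forall>\<^sub>F k in sequentially. H_upper (Suc k) g \<le> log_window_limsup T g + ereal (2 * C * poisson_peak k * T)"
    using eventually_ge_at_top[of 1]
  proof eventually_elim
    case (elim k)
    then obtain j where "k = Suc j" by (cases k) auto
    then show ?case using H_upper_le_log_window_limsup[OF g T, of j] by simp
  qed
  show "(\<lambda>k. 2 * C * poisson_peak k * T) \<longlonglongrightarrow> 0"
    using tendsto_mult[OF tendsto_mult[OF tendsto_const poisson_peak_tendsto_0] tendsto_const] by simp
qed

lemma Limsup_log_window_limsup_le_H_upper:
  assumes g: "bounded_measurable C g"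
  shows "Limsup at_top (\<lambda>\<theta>. log_window_limsup (ln \<theta>) g) \<le> H_upper n g"
proof (rule Limsup_le_of_le_plus_tendsto_0)
  show "\<forall>\<^sub>F \<theta> in at_top. log_window_limsup (ln \<theta>) g \<le> H_upper n g + ereal (2 * real n * C / ln \<theta>)"
    using eventually_gt_at_top[of 1]
    by eventually_elim (use log_window_limsup_le_H_upper[OF g] in simp)
  show "((\<lambda>\<theta>. 2 * real n * C / ln \<theta>) \<longlongrightarrow> 0) at_top"
    by (intro tendsto_divide_0[OF tendsto_const] filterlim_at_top_imp_at_infinity ln_at_top)
qed

section \<open>Equality of the two functionals\<close>

lemma Linf_obtain_bounded_measurable:
  assumes "f \<in> Linf"
  obtains C g where "bounded_measurable C g" "U f = U g"
    "\<And>x y. 1 \<le> x \<Longrightarrow> (LINT t:{x..y}|lborel. f t / t) = (LINT t:{x..y}|lborel. g t / t)"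
proof -
  from assms obtain C0 where m: "(\<lambda>x. indicator {1..} x *\<^sub>R f x) \<in> borel_measurable lborel"
    and ae: "AE x in lborel. x \<in> {1..} \<longrightarrow> \<bar>f x\<bar> \<le> C0"
    by (auto simp: Linf_def set_borel_measurable_def)
  define C where "C = max C0 0"
  define f1 where "f1 x = indicator {1..} x * f x" for x :: real
  have [measurable]: "f1 \<in> borel_measurable borel" using m by (simp add: f1_def[abs_def])
  define g where "g x = (if \<bar>f1 x\<bar> \<le> C then f1 x else 0)" for x
  have [measurable]: "g \<in> borel_measurable borel" unfolding g_def by measurable
  have g: "bounded_measurable C g" by (auto simp: bounded_measurable_def g_def C_def)
  have "AE x in lborel. f1 x = g x"
    using ae by eventually_elim (auto simp: f1_def g_def C_def indicator_def)
  then have fg: "(LINT t:{a..b}|lborel. f t * w t) = (LINT t:{a..b}|lborel. g t * w t)"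
    if "1 \<le> a" and [measurable]: "w \<in> borel_measurable borel" for a b w
  proof -
    have "(LINT t:{a..b}|lborel. f t * w t) = (LINT t:{a..b}|lborel. f1 t * w t)"
      by (rule set_lebesgue_integral_cong) (use that in \<open>auto simp: f1_def\<close>)
    also have "\<dots> = (LINT t:{a..b}|lborel. g t * w t)"
      by (rule set_lebesgue_integral_cong_AE) (use \<open>AE x in lborel. f1 x = g x\<close> in \<open>auto elim: AE_mp\<close>)
    finally show ?thesis .
  qed
  show ?thesis
  proof (rule that[OF g])
    show "U f = U g" using fg[of 1 "\<lambda>_. 1"] by (simp add: fun_eq_iff U_def)
    show "(LINT t:{x..y}|lborel. f t / t) = (LINT t:{x..y}|lborel. g t / t)" if "1 \<le> x" for x y
      using fg[OF that, of "\<lambda>t. 1 / t" y] by simp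
  qed
qed

lemma Linf_uminus: "f \<in> Linf \<Longrightarrow> (\<lambda>x. - f x) \<in> Linf"
  unfolding Linf_def set_borel_measurable_def by auto

lemma H_inf_upper_eq_L1_upper:
  assumes "f \<in> Linf"
  shows "H_inf_upper f = L1_upper f"
proof -
  obtain C g where g: "bounded_measurable C g" and "U f = U g"
    and window: "\<And>x y. 1 \<le> x \<Longrightarrow> (LINT t:{x..y}|lborel. f t / t) = (LINT t:{x..y}|lborel. g t / t)"
    using Linf_obtain_bounded_measurable[OF assms] by blast
  define A where "A \<theta> = Limsup at_top (\<lambda>x. ereal ((1 / ln \<theta>) * (LINT t:{x..\<theta> * x}|lborel. f t / t)))"
    for \<theta> :: real
  have H: "H_upper (Suc k) f = H_upper (Suc k) g" for k
    by (simp only: H_upper_def funpow_Suc_right comp_apply \<open>U f = U g\<close>)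
  have A: "A \<theta> = log_window_limsup (ln \<theta>) g" if "1 < \<theta>" for \<theta>
    unfolding A_def log_window_limsup_def
    by (rule Limsup_eq, rule eventually_mono[OF eventually_ge_at_top[of 1]])
       (use window that in \<open>simp add: log_window_mean_def\<close>)
  have "lim (\<lambda>k. H_upper (Suc k) g) = Lim at_top A"
  proof (rule lim_eq_Lim_of_Limsup_le)
    show "\<forall>\<^sub>F \<theta> in at_top. Limsup sequentially (\<lambda>k. H_upper (Suc k) g) \<le> A \<theta>"
      using eventually_gt_at_top[of 1]
      by eventually_elim (use A Limsup_H_upper_le_log_window_limsup[OF g] in simp)
    have "Limsup at_top A = Limsup at_top (\<lambda>\<theta>. log_window_limsup (ln \<theta>) g)"
      by (rule Limsup_eq, rule eventually_mono[OF eventually_gt_at_top[of 1]]) (use A in simp)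
    then show "Limsup at_top A \<le> H_upper (Suc k) g" for k
      using Limsup_log_window_limsup_le_H_upper[OF g] by simp
  qed
  then show ?thesis by (simp add: H_inf_upper_def L1_upper_def H A_def[abs_def])
qed

theorem theorem5p1:
  shows "(\<forall>f\<in>Linf. H_inf_upper f = L1_upper f)
         \<and> sdomain H_inf_upper = sdomain L1_upper
         \<and> (\<forall>f\<in>sdomain H_inf_upper. H_inf_upper f = L1_upper f)"
  using H_inf_upper_eq_L1_upper Linf_uminus unfolding sdomain_def by auto

end
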